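(* In the roundabout exploration process described in the context, let $t\in[N]$ and let $r$ be an integer with $N\ge r\ge 2k+1$. If $|A(t)|\ge r$, then \[t\le\frac{2N-r}{r-2k}.\]
   Context: Let $n\ge 2$ and $k$ be natural numbers, $T$ a tree on an $n$-element vertex set $V$, and $N=2(n-1)$. Fix a root $r_0$ and a DFS tour of $T$ starting and ending at $r_0$ that traverses each edge of $T$ exactly twice, giving a cyclic vertex sequence $(v_1,\dots,v_N,v_{N+1})$ with $v_{N+1}=v_1=r_0$, and tour edges $e_i=\{v_i,v_{i+1}\}$ for $i\in[N]$. For $i,j\in[N]$ the circular interval $[\![i,j]\!]$ is $\{i,i+1,\dots,j\}$ if $i\le j$ and $\{i,\dots,N,1,\dots,j\}$ if $i>j$. Let $\langle G_1,\dots,G_N\rangle$ be graphs on $V$, each containing all but at most $k$ edges of $T$. Roundabout exploration process: agents $a_1,\dots,a_N$ with initial states $s_i(0)=i$. For steps $t=1,\dots,N$: (Movement) for every $i\in[N]$, if $s_i(t-1)=q$ then $s_i(t)=(q\bmod N)+1$ if $e_q\in E(G_t)$, and $s_i(t)=q$ otherwise. Let $D_i(t)=[\![i,s_i(t)]\!]$ and $D_i(0)=\{i\}$. (Elimination) $A(0)=\{a_1,\dots,a_N\}$; $A(t)$ is obtained from $A(t-1)$ by repeatedly removing an arbitrary agent $a_i$ of the current set with $D_i(t)\subseteq\bigcup D_j(t)$ over the other agents $a_j$ of the current set, until no such agent remains. *)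

theory Defs
  imports Complex_Main
begin

definition edges_on :: "'a set \<Rightarrow> 'a set set" where
  "edges_on V = {e. \<exists>x y. x \<in> V \<and> y \<in> V \<and> x \<noteq> y \<and> e = {x, y}}"

definition connected_on :: "'a set \<Rightarrow> 'a set set \<Rightarrow> bool" where
  "connected_on V E = (\<forall>x\<in>V. \<forall>y\<in>V. (x, y) \<in> {(a, b). {a, b} \<in> E}\<^sup>*)"

definition is_tree :: "'a set \<Rightarrow> 'a set set \<Rightarrow> bool" where
  "is_tree V E = (E \<subseteq> edges_on V \<and> connected_on V E \<and>
                  (\<forall>e\<in>E. \<not> connected_on V (E - {e})))"

definition is_dfs_tour :: "'a set set \<Rightarrow> 'a \<Rightarrow> nat \<Rightarrow> (nat \<Rightarrow> 'a) \<Rightarrow> bool" where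
  "is_dfs_tour E r0 N v = (v 1 = r0 \<and> v (N + 1) = r0 \<and>
      (\<forall>i\<in>{1..N}. {v i, v (Suc i)} \<in> E) \<and>
      (\<forall>e\<in>E. card {i\<in>{1..N}. {v i, v (Suc i)} = e} = 2))"

definition cint :: "nat \<Rightarrow> nat \<Rightarrow> nat \<Rightarrow> nat set" where
  "cint N i j = (if i \<le> j then {i..j} else {i..N} \<union> {1..j})"

fun agent_state :: "nat \<Rightarrow> (nat \<Rightarrow> 'a) \<Rightarrow> (nat \<Rightarrow> 'a set set) \<Rightarrow> nat \<Rightarrow> nat \<Rightarrow> nat" where
  "agent_state N v G i 0 = i"
| "agent_state N v G i (Suc t) =
     (let q = agent_state N v G i t in
      if {v q, v (Suc q)} \<in> G (Suc t) then q mod N + 1 else q)"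

definition Dset :: "nat \<Rightarrow> (nat \<Rightarrow> 'a) \<Rightarrow> (nat \<Rightarrow> 'a set set) \<Rightarrow> nat \<Rightarrow> nat \<Rightarrow> nat set" where
  "Dset N v G i t = (if t = 0 then {i} else cint N i (agent_state N v G i t))"

definition redundant :: "(nat \<Rightarrow> nat set) \<Rightarrow> nat set \<Rightarrow> nat \<Rightarrow> bool" where
  "redundant D S i = (i \<in> S \<and> D i \<subseteq> (\<Union>j\<in>S - {i}. D j))"

definition elim_step :: "(nat \<Rightarrow> nat set) \<Rightarrow> (nat set \<times> nat set) set" where
  "elim_step D = {(S, S - {i}) | S i. redundant D S i}"

definition elimination_outcome :: "(nat \<Rightarrow> nat set) \<Rightarrow> nat set \<Rightarrow> nat set \<Rightarrow> bool" where
  "elimination_outcome D S S' = ((S, S') \<in> (elim_step D)\<^sup>* \<and> (\<forall>i. \<not> redundant D S' i))"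

text \<open>A is a run of the roundabout process (agents identified with their indices).\<close>
definition roundabout_run :: "nat \<Rightarrow> (nat \<Rightarrow> 'a) \<Rightarrow> (nat \<Rightarrow> 'a set set) \<Rightarrow> (nat \<Rightarrow> nat set) \<Rightarrow> bool" where
  "roundabout_run N v G A = (A 0 = {1..N} \<and>
     (\<forall>t\<in>{1..N}. elimination_outcome (\<lambda>i. Dset N v G i t) (A (t - 1)) (A t)))"

end

theory Submission
  imports Defs
begin

(*
  D_i(t) is the arc of the tour swept by agent a_i up to time t; it has one more element than the
  number of steps at which a_i moved.  After elimination no position lies on three surviving arcs
  (of three integer intervals through a common point, one is covered by the other two), so the
  lengths of the m surviving arcs add up to at most 2N.  Conversely, survivors occupy pairwise
  distinct positions at every earlier step, and an agent is blocked at step u only on a position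
  whose tour edge is missing from G_u; each of the at most k missing tree edges occurs twice in
  the tour, so at least m - 2k survivors move at every step.  Hence t (m - 2k) + m <= 2N.
*)

section \<open>Arcs of the tour\<close>

(* Tour positions are 1..N and wrap N y is the position congruent to y modulo N, so arc N lo c is
   the circular interval of length c + 1 starting at lo; D_i(t) = arc N i (moves of a_i up to t). *)
definition wrap :: "nat \<Rightarrow> int \<Rightarrow> nat" where
  "wrap N y = nat ((y - 1) mod int N) + 1"

definition arc :: "nat \<Rightarrow> int \<Rightarrow> nat \<Rightarrow> nat set" where
  "arc N lo c = wrap N ` {lo..lo + int c}"

lemma wrap_in_range: "0 < N \<Longrightarrow> wrap N y \<in> {1..N}"
  by (simp add: wrap_def nat_less_iff Suc_le_eq)

lemma wrap_eq_iff:
  assumes "0 < N"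
  shows "wrap N x = wrap N y \<longleftrightarrow> x mod int N = y mod int N"
proof -
  have "wrap N x = wrap N y \<longleftrightarrow> (x - 1) mod int N = (y - 1) mod int N"
    using assms by (simp add: wrap_def eq_nat_nat_iff)
  also have "\<dots> \<longleftrightarrow> x mod int N = y mod int N"
    by (simp add: mod_eq_dvd_iff)
  finally show ?thesis .
qed

lemma wrap_of_nat: "i \<in> {1..N} \<Longrightarrow> wrap N (int i) = i"
  by (simp add: wrap_def nat_diff_distrib)

lemma arc_subset: "0 < N \<Longrightarrow> arc N lo c \<subseteq> {1..N}"
  using wrap_in_range by (auto simp: arc_def)

lemma arc_mono: "lo' \<le> lo \<Longrightarrow> lo + int c \<le> lo' + int c' \<Longrightarrow> arc N lo c \<subseteq> arc N lo' c'"
  unfolding arc_def by (intro image_mono) auto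

lemma arc_shift:
  assumes "0 < N" "lo' mod int N = lo mod int N"
  shows "arc N lo' c = arc N lo c"
proof -
  have shift: "{lo'..lo' + int c} = (+) (lo' - lo) ` {lo..lo + int c}"
    by (simp only: image_add_atLeastAtMost) (simp add: algebra_simps)
  have "wrap N (lo' - lo + y) = wrap N y" for y
    using assms by (simp add: wrap_eq_iff mod_eq_dvd_iff)
  then show ?thesis
    unfolding arc_def shift image_image by simp
qed

lemma arc_anchor:
  assumes "0 < N" "x \<in> arc N lo c"
  obtains lo' where "arc N lo' c = arc N lo c" "lo' \<le> int x" "int x \<le> lo' + int c"
proof -
  obtain y where y: "lo \<le> y" "y \<le> lo + int c" "x = wrap N y"
    using assms(2) by (auto simp: arc_def)
  then have "x \<in> {1..N}"
    using wrap_in_range[OF assms(1)] by simp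
  then have "wrap N (int x) = wrap N y"
    using y(3) by (simp add: wrap_of_nat)
  then have "(lo + (int x - y)) mod int N = lo mod int N"
    using assms(1) by (simp add: wrap_eq_iff mod_eq_dvd_iff)
  then have "arc N (lo + (int x - y)) c = arc N lo c"
    by (rule arc_shift[OF assms(1)])
  then show ?thesis
    by (rule that) (use y in auto)
qed

lemma arc_subset_arc_same_end:
  assumes "0 < N" "(lo + int c) mod int N = (lo' + int c') mod int N" "c \<le> c'"
  shows "arc N lo c \<subseteq> arc N lo' c'"
proof -
  have "(lo + int c - int c') mod int N = lo' mod int N"
    using mod_diff_cong[OF assms(2), of "int c'" "int c'"] by simp
  then have "arc N lo' c' = arc N (lo + int c - int c') c'"
    by (rule arc_shift[OF assms(1) sym])
  then show ?thesis
    using arc_mono[of "lo + int c - int c'" lo c c'] assms(3) by simp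
qed

lemma card_arc:
  assumes "c < N"
  shows "card (arc N lo c) = c + 1"
proof -
  have "inj_on (wrap N) {lo..lo + int c}"
  proof (rule inj_onI)
    fix x y assume "x \<in> {lo..lo + int c}" "y \<in> {lo..lo + int c}" "wrap N x = wrap N y"
    then have "int N dvd x - y" "\<bar>x - y\<bar> < int N"
      using assms by (auto simp: wrap_eq_iff mod_eq_dvd_iff)
    then show "x = y"
      using dvd_imp_le_int[of "x - y" "int N"] by (cases "x = y") auto
  qed
  then show ?thesis
    by (simp add: arc_def card_image)
qed

lemma arc_eq_atLeastAtMost:
  assumes "1 \<le> i" "i + c \<le> N"
  shows "arc N (int i) c = {i..i + c}"
proof -
  have "{int i..int i + int c} = int ` {i..i + c}"
    by (simp add: image_int_atLeastAtMost)
  then have "arc N (int i) c = (\<lambda>x. wrap N (int x)) ` {i..i + c}"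
    by (simp add: arc_def image_image)
  also have "\<dots> = id ` {i..i + c}"
    using assms by (intro image_cong) (auto simp: wrap_of_nat)
  finally show ?thesis
    by simp
qed

lemma arc_append: "arc N lo (a + 1 + b) = arc N lo a \<union> arc N (lo + int a + 1) b"
proof -
  have "{lo..lo + int (a + 1 + b)} = {lo..lo + int a} \<union> {lo + int a + 1..lo + int a + 1 + int b}"
    by auto
  then show ?thesis
    by (simp add: arc_def image_Un)
qed

lemma cint_eq_arc:
  assumes i: "i \<in> {1..N}" and c: "c < N"
  shows "cint N i ((i - 1 + c) mod N + 1) = arc N (int i) c"
proof (cases "i + c \<le> N")
  case True
  then have "(i - 1 + c) mod N + 1 = i + c"
    using i by simp
  then show ?thesis
    using True i by (simp add: cint_def arc_eq_atLeastAtMost)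
next
  case False
  define b where "b = i + c - N - 1"
  have b: "i - 1 + c = N + b" "1 + b < i" "c = N - i + 1 + b"
    using False i c by (auto simp: b_def)
  have "arc N (int i) c = arc N (int i) (N - i) \<union> arc N (int N + 1) b"
    unfolding b(3) arc_append using i by (simp add: of_nat_diff)
  also have "arc N (int i) (N - i) = {i..N}"
    using arc_eq_atLeastAtMost[of i "N - i" N] i by simp
  also have "arc N (int N + 1) b = arc N 1 b"
    using i by (intro arc_shift) auto
  also have "\<dots> = {1..1 + b}"
    using arc_eq_atLeastAtMost[of 1 b N] b(2) i by simp
  finally show ?thesis
    using False b by (simp add: cint_def)
qed

section \<open>Points covered by several arcs\<close>

lemma atLeastAtMost_covered_by_two:
  fixes p :: int
  assumes "p \<in> {a1..b1}" "p \<in> {a2..b2}" "p \<in> {a3..b3}"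
  shows "{a1..b1} \<subseteq> {a2..b2} \<union> {a3..b3} \<or> {a2..b2} \<subseteq> {a1..b1} \<union> {a3..b3}
    \<or> {a3..b3} \<subseteq> {a1..b1} \<union> {a2..b2}"
proof -
  have cover: "{a..b} \<subseteq> {a'..b'} \<union> {a''..b''}"
    if "p \<in> {a'..b'}" "p \<in> {a''..b''}" "min a' a'' \<le> a" "b \<le> max b' b''"
    for a b a' b' a'' b'' :: int
    using that by auto
  have "(min a2 a3 \<le> a1 \<and> b1 \<le> max b2 b3) \<or> (min a1 a3 \<le> a2 \<and> b2 \<le> max b1 b3)
    \<or> (min a1 a2 \<le> a3 \<and> b3 \<le> max b1 b2)"
    using assms by auto
  then show ?thesis
    using cover assms by blast
qed

lemma arc_covered_by_two:
  assumes "0 < N" "x \<in> arc N l1 c1" "x \<in> arc N l2 c2" "x \<in> arc N l3 c3"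
  shows "arc N l1 c1 \<subseteq> arc N l2 c2 \<union> arc N l3 c3 \<or> arc N l2 c2 \<subseteq> arc N l1 c1 \<union> arc N l3 c3
    \<or> arc N l3 c3 \<subseteq> arc N l1 c1 \<union> arc N l2 c2"
proof -
  obtain l1' l2' l3' where
    "arc N l1' c1 = arc N l1 c1" "arc N l2' c2 = arc N l2 c2" "arc N l3' c3 = arc N l3 c3"
    "int x \<in> {l1'..l1' + int c1}" "int x \<in> {l2'..l2' + int c2}" "int x \<in> {l3'..l3' + int c3}"
    using arc_anchor[OF assms(1,2)] arc_anchor[OF assms(1,3)] arc_anchor[OF assms(1,4)]
    by (metis atLeastAtMost_iff)
  then show ?thesis
    using atLeastAtMost_covered_by_two[of "int x"] unfolding arc_def
    by (metis image_Un image_mono)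
qed

lemma redundant_if_covered:
  "i \<in> S \<Longrightarrow> J \<subseteq> S - {i} \<Longrightarrow> D i \<subseteq> (\<Union>j\<in>J. D j) \<Longrightarrow> redundant D S i"
  unfolding redundant_def by blast

lemma card_arcs_containing_le_2:
  assumes "0 < N" "\<forall>i. \<not> redundant D S i" "\<forall>i\<in>S. \<exists>lo c. D i = arc N lo c"
  shows "card {i\<in>S. x \<in> D i} \<le> 2"
proof (rule ccontr)
  assume "\<not> ?thesis"
  then obtain T where T: "T \<subseteq> {i\<in>S. x \<in> D i}" "card T = 3"
    using obtain_subset_with_card_n[of 3 "{i\<in>S. x \<in> D i}"] by auto
  then obtain a b c where abc: "T = {a, b, c}" "a \<noteq> b" "b \<noteq> c" "a \<noteq> c"
    by (auto simp: card_3_iff)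
  then have in_S: "a \<in> S" "b \<in> S" "c \<in> S" and x: "x \<in> D a" "x \<in> D b" "x \<in> D c"
    using T(1) by auto
  obtain la ca lb cb lc cc where "D a = arc N la ca" "D b = arc N lb cb" "D c = arc N lc cc"
    using assms(3) in_S by meson
  then have covered: "D a \<subseteq> D b \<union> D c \<or> D b \<subseteq> D a \<union> D c \<or> D c \<subseteq> D a \<union> D b"
    using arc_covered_by_two[OF assms(1)] x by simp
  have not_covered: "\<not> D i \<subseteq> D j \<union> D k" if "i \<in> S" "j \<in> S" "k \<in> S" "i \<noteq> j" "i \<noteq> k" for i j k
    using assms(2) redundant_if_covered[of i S "{j, k}" D] that by auto
  show False
    using not_covered[of a b c] not_covered[of b a c] not_covered[of c a b] in_S abc covered
    by blast
qed

lemma sum_card_filter_swap: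
  assumes "finite A" "finite B"
  shows "(\<Sum>a\<in>A. card {b\<in>B. R a b}) = (\<Sum>b\<in>B. card {a\<in>A. R a b})"
proof -
  have "(\<Sum>a\<in>A. card {b\<in>B. R a b}) = (\<Sum>a\<in>A. \<Sum>b\<in>B. if R a b then 1 else 0)"
    using assms by (simp add: sum.If_cases Int_def)
  also have "\<dots> = (\<Sum>b\<in>B. \<Sum>a\<in>A. if R a b then 1 else 0)"
    by (rule sum.swap)
  also have "\<dots> = (\<Sum>b\<in>B. card {a\<in>A. R a b})"
    using assms by (simp add: sum.If_cases Int_def)
  finally show ?thesis .
qed

lemma sum_card_le_depth:
  assumes "finite S" "finite X" "\<forall>i\<in>S. D i \<subseteq> X" "\<forall>x\<in>X. card {i\<in>S. x \<in> D i} \<le> d"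
  shows "(\<Sum>i\<in>S. card (D i)) \<le> d * card X"
proof -
  have "(\<Sum>i\<in>S. card (D i)) = (\<Sum>i\<in>S. card {x\<in>X. x \<in> D i})"
    using assms(3) by (intro sum.cong) (auto intro: arg_cong[where f=card])
  also have "\<dots> = (\<Sum>x\<in>X. card {i\<in>S. x \<in> D i})"
    using assms(1,2) by (rule sum_card_filter_swap)
  also have "\<dots> \<le> d * card X"
    using sum_bounded_above[of X "\<lambda>x. card {i\<in>S. x \<in> D i}" d] assms(4)
    by (simp add: mult.commute)
  finally show ?thesis .
qed

section \<open>Movement of a single agent\<close>

definition moved :: "nat \<Rightarrow> (nat \<Rightarrow> 'a) \<Rightarrow> (nat \<Rightarrow> 'a set set) \<Rightarrow> nat \<Rightarrow> nat \<Rightarrow> bool" where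
  "moved N v G i u \<longleftrightarrow>
     {v (agent_state N v G i (u - 1)), v (Suc (agent_state N v G i (u - 1)))} \<in> G u"

definition moves :: "nat \<Rightarrow> (nat \<Rightarrow> 'a) \<Rightarrow> (nat \<Rightarrow> 'a set set) \<Rightarrow> nat \<Rightarrow> nat \<Rightarrow> nat" where
  "moves N v G i t = card {u\<in>{1..t}. moved N v G i u}"

lemma moves_0 [simp]: "moves N v G i 0 = 0"
  by (simp add: moves_def)

lemma moves_Suc:
  "moves N v G i (Suc t) = moves N v G i t + (if moved N v G i (Suc t) then 1 else 0)"
proof -
  have "{u\<in>{1..Suc t}. moved N v G i u} = {u\<in>{1..t}. moved N v G i u}
      \<union> (if moved N v G i (Suc t) then {Suc t} else {})"
    by (auto simp: le_Suc_eq)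
  then show ?thesis
    by (simp add: moves_def)
qed

lemma moves_le: "moves N v G i t \<le> t"
proof -
  have "moves N v G i t \<le> card {1..t}"
    unfolding moves_def by (rule card_mono) auto
  then show ?thesis
    by simp
qed

lemma agent_state_eq:
  assumes "i \<in> {1..N}"
  shows "agent_state N v G i t = (i - 1 + moves N v G i t) mod N + 1"
proof (induction t)
  case 0
  have "i - 1 < N"
    using assms by auto
  then show ?case
    using assms by simp
next
  case (Suc t)
  then show ?case
    by (simp add: moves_Suc moved_def Let_def mod_Suc_eq)
qed

lemma agent_state_eq_iff:
  assumes "i \<in> {1..N}" "j \<in> {1..N}"
  shows "agent_state N v G i t = agent_state N v G j t
    \<longleftrightarrow> (int i + int (moves N v G i t)) mod int N = (int j + int (moves N v G j t)) mod int N"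
proof -
  have to_int: "int ((k - 1 + m) mod N) = (int k + int m - 1) mod int N" if "1 \<le> k" for k m
    using that by (simp add: of_nat_mod of_nat_diff algebra_simps)
  have i: "1 \<le> i" "1 \<le> j"
    using assms by auto
  have "agent_state N v G i t = agent_state N v G j t
      \<longleftrightarrow> int ((i - 1 + moves N v G i t) mod N) = int ((j - 1 + moves N v G j t) mod N)"
    using assms by (simp add: agent_state_eq)
  also have "\<dots> \<longleftrightarrow>
      (int i + int (moves N v G i t) - 1) mod int N = (int j + int (moves N v G j t) - 1) mod int N"
    unfolding to_int[OF i(1)] to_int[OF i(2)] ..
  also have "\<dots> \<longleftrightarrow>
      (int i + int (moves N v G i t)) mod int N = (int j + int (moves N v G j t)) mod int N"
    by (simp add: mod_eq_dvd_iff algebra_simps)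
  finally show ?thesis .
qed

lemma agent_state_in_range: "i \<in> {1..N} \<Longrightarrow> agent_state N v G i t \<in> {1..N}"
  by (simp add: agent_state_eq Suc_le_eq)

lemma agent_state_eq_persists:
  "agent_state N v G i s = agent_state N v G j s \<Longrightarrow> s \<le> t
    \<Longrightarrow> agent_state N v G i t = agent_state N v G j t"
  by (induction t) (auto simp: Let_def le_Suc_eq)

lemma Dset_subset: "i \<in> {1..N} \<Longrightarrow> Dset N v G i t \<subseteq> {1..N}"
  using agent_state_in_range[of i N v G t] by (auto simp: Dset_def cint_def)

lemma Dset_eq_arc:
  assumes "i \<in> {1..N}" "0 < t" "moves N v G i t < N"
  shows "Dset N v G i t = arc N (int i) (moves N v G i t)"
proof -
  have "Dset N v G i t = cint N i (agent_state N v G i t)"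
    using assms(2) by (simp add: Dset_def)
  also have "\<dots> = cint N i ((i - 1 + moves N v G i t) mod N + 1)"
    by (simp only: agent_state_eq[OF assms(1)])
  also have "\<dots> = arc N (int i) (moves N v G i t)"
    by (rule cint_eq_arc[OF assms(1,3)])
  finally show ?thesis .
qed

lemma sum_moves_ge:
  assumes "finite S" "\<forall>u\<in>{1..t}. card {i\<in>S. \<not> moved N v G i u} \<le> s"
  shows "t * card S \<le> (\<Sum>i\<in>S. moves N v G i t) + t * s"
proof -
  have "card S \<le> card {i\<in>S. moved N v G i u} + s" if "u \<in> {1..t}" for u
  proof -
    have "card S = card ({i\<in>S. moved N v G i u} \<union> {i\<in>S. \<not> moved N v G i u})"
      by (rule arg_cong[where f = card]) blast
    also have "\<dots> \<le> card {i\<in>S. moved N v G i u} + card {i\<in>S. \<not> moved N v G i u}"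
      by (rule card_Un_le)
    also have "\<dots> \<le> card {i\<in>S. moved N v G i u} + s"
      using assms(2) that by simp
    finally show ?thesis .
  qed
  then have "(\<Sum>u\<in>{1..t}. card S) \<le> (\<Sum>u\<in>{1..t}. card {i\<in>S. moved N v G i u} + s)"
    by (rule sum_mono)
  also have "\<dots> = (\<Sum>i\<in>S. moves N v G i t) + t * s"
    unfolding moves_def sum.distrib
    using sum_card_filter_swap[OF assms(1) finite_atLeastAtMost, where R = "moved N v G"]
    by simp
  finally show ?thesis
    by simp
qed

section \<open>Runs of the roundabout process\<close>

lemma is_tree_finite_edges: "finite V \<Longrightarrow> is_tree V E \<Longrightarrow> finite E"
  unfolding is_tree_def edges_on_def by (auto intro: finite_subset[of _ "Pow V"])

lemma card_tour_steps_outside: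
  assumes "is_dfs_tour ET r0 N v" "finite ET"
  shows "card {q\<in>{1..N}. {v q, v (Suc q)} \<notin> F} \<le> 2 * card (ET - F)"
proof -
  have "{q\<in>{1..N}. {v q, v (Suc q)} \<notin> F} \<subseteq> (\<Union>e\<in>ET - F. {q\<in>{1..N}. {v q, v (Suc q)} = e})"
    using assms(1) by (auto simp: is_dfs_tour_def)
  then have "card {q\<in>{1..N}. {v q, v (Suc q)} \<notin> F}
      \<le> card (\<Union>e\<in>ET - F. {q\<in>{1..N}. {v q, v (Suc q)} = e})"
    using assms(2) by (intro card_mono) auto
  also have "\<dots> \<le> (\<Sum>e\<in>ET - F. card {q\<in>{1..N}. {v q, v (Suc q)} = e})"
    by (rule card_UN_le) (use assms(2) in auto)
  also have "\<dots> = 2 * card (ET - F)"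
    using assms(1) by (simp add: is_dfs_tour_def)
  finally show ?thesis .
qed

lemma elim_steps_subset: "(S, S') \<in> (elim_step D)\<^sup>* \<Longrightarrow> S' \<subseteq> S"
  by (induction rule: rtrancl_induct) (auto simp: elim_step_def)

lemma run_survivors_decreasing:
  assumes "roundabout_run N v G A" "t \<in> {1..N}"
  shows "A t \<subseteq> A (t - 1)"
proof -
  have "(A (t - 1), A t) \<in> (elim_step (\<lambda>i. Dset N v G i t))\<^sup>*"
    using assms by (simp add: roundabout_run_def elimination_outcome_def)
  then show ?thesis
    by (rule elim_steps_subset)
qed

lemma run_survivors_subset: "roundabout_run N v G A \<Longrightarrow> t \<le> N \<Longrightarrow> A t \<subseteq> {1..N}"
proof (induction t)
  case 0
  then show ?case
    by (simp add: roundabout_run_def)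
next
  case (Suc t)
  then show ?case
    using run_survivors_decreasing[of N v G A "Suc t"] by auto
qed

lemma run_irredundant:
  "roundabout_run N v G A \<Longrightarrow> t \<in> {1..N} \<Longrightarrow> \<not> redundant (\<lambda>i. Dset N v G i t) (A t) i"
  by (simp add: roundabout_run_def elimination_outcome_def)

(* An agent that moved N times moved at every step, so already at time N - 1 its arc was the whole
   cycle and made every other agent redundant. *)
lemma run_moves_less:
  assumes run: "roundabout_run N v G A" and t: "t \<in> {1..N}"
    and ij: "i \<in> A t" "j \<in> A t" "i \<noteq> j"
  shows "moves N v G i t < N"
proof (rule ccontr)
  assume "\<not> ?thesis"
  then have big: "N \<le> moves N v G i t"
    by simp
  then have tN: "t = N"
    using moves_le[of N v G i t] t by simp
  have full_N: "moves N v G i N = N"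
    using big moves_le[of N v G i t] unfolding tN by simp
  have range: "i \<in> {1..N}" "j \<in> {1..N}"
    using run_survivors_subset[OF run, of t] t ij by auto
  then have N2: "2 \<le> N"
    using ij(3) by auto
  have "moves N v G i N \<le> moves N v G i (N - 1) + 1"
    using moves_Suc[of N v G i "N - 1"] N2 by (simp split: if_splits)
  then have full: "moves N v G i (N - 1) = N - 1"
    using full_N moves_le[of N v G i "N - 1"] by simp
  have "Dset N v G i (N - 1) = arc N (int i) (N - 1)"
    using Dset_eq_arc[OF range(1), of "N - 1" v G] full N2 by simp
  moreover have "arc N (int i) (N - 1) = {1..N}"
    using card_subset_eq[OF finite_atLeastAtMost arc_subset] card_arc[of "N - 1" N] N2 by simp
  ultimately have "Dset N v G j (N - 1) \<subseteq> Dset N v G i (N - 1)"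
    using Dset_subset[OF range(2)] by simp
  moreover have "i \<in> A (N - 1)" "j \<in> A (N - 1)"
    using run_survivors_decreasing[OF run, of N] tN ij N2 by auto
  ultimately have "redundant (\<lambda>i. Dset N v G i (N - 1)) (A (N - 1)) j"
    using ij(3) by (intro redundant_if_covered[where J = "{i}"]) auto
  then show False
    using run_irredundant[OF run, of "N - 1"] N2 by simp
qed

lemma run_Dset_eq_arc:
  assumes "roundabout_run N v G A" "t \<in> {1..N}" "i \<in> A t" "j \<in> A t" "i \<noteq> j"
  shows "Dset N v G i t = arc N (int i) (moves N v G i t)"
proof -
  have "i \<in> {1..N}"
    using run_survivors_subset[OF assms(1), of t] assms(2,3) by auto
  then show ?thesis
    using assms(2) run_moves_less[OF assms] by (intro Dset_eq_arc) auto
qed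

lemma run_sum_moves_le:
  assumes run: "roundabout_run N v G A" and t: "t \<in> {1..N}"
  shows "(\<Sum>i\<in>A t. moves N v G i t + 1) \<le> 2 * N"
proof (cases "2 \<le> card (A t)")
  case True
  have other: "\<exists>j\<in>A t. j \<noteq> i" for i
  proof (rule ccontr)
    assume "\<not> ?thesis"
    then have "card (A t) \<le> card {i}"
      by (intro card_mono) auto
    then show False
      using True by simp
  qed
  have arc: "Dset N v G i t = arc N (int i) (moves N v G i t)" and less: "moves N v G i t < N"
    if "i \<in> A t" for i
    using other[of i] run_Dset_eq_arc[OF run t that] run_moves_less[OF run t that] by auto
  have "(\<Sum>i\<in>A t. moves N v G i t + 1) = (\<Sum>i\<in>A t. card (Dset N v G i t))"
    using arc less card_arc by simp
  also have "\<dots> \<le> 2 * card {1..N}"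
  proof (rule sum_card_le_depth)
    have range: "A t \<subseteq> {1..N}"
      using run_survivors_subset[OF run, of t] t by simp
    show "finite (A t)"
      using range by (rule finite_subset) simp
    show "\<forall>i\<in>A t. Dset N v G i t \<subseteq> {1..N}"
      using range by (intro ballI Dset_subset) auto
    show "\<forall>x\<in>{1..N}. card {i\<in>A t. x \<in> Dset N v G i t} \<le> 2"
      using t arc run_irredundant[OF run t] by (intro ballI card_arcs_containing_le_2[of N]) auto
  qed simp
  finally show ?thesis
    by simp
next
  case False
  have "(\<Sum>i\<in>A t. moves N v G i t + 1) \<le> card (A t) * (t + 1)"
    using sum_bounded_above[of "A t" "\<lambda>i. moves N v G i t + 1" "t + 1"] moves_le by fastforce
  also have "\<dots> \<le> 1 * (t + 1)"
    using False by (intro mult_le_mono1) simp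
  also have "\<dots> \<le> 2 * N"
    using t by simp
  finally show ?thesis .
qed

(* Two agents on the same position stay together, so their arcs end at the same point and are
   nested; hence survivors occupy distinct positions at every earlier step. *)
lemma run_card_stuck_le:
  assumes run: "roundabout_run N v G A" and t: "t \<in> {1..N}" and u: "u \<in> {1..t}"
  shows "card {i\<in>A t. \<not> moved N v G i u} \<le> card {q\<in>{1..N}. {v q, v (Suc q)} \<notin> G u}"
proof -
  let ?pos = "\<lambda>i. agent_state N v G i (u - 1)"
  let ?D = "\<lambda>i. Dset N v G i t"
  have range: "A t \<subseteq> {1..N}"
    using run_survivors_subset[OF run, of t] t by simp
  have "inj_on ?pos (A t)"
  proof (rule inj_onI, rule ccontr)
    fix i j assume ij: "i \<in> A t" "j \<in> A t" "?pos i = ?pos j" "i \<noteq> j"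
    have N: "0 < N"
      using t by simp
    have "u - 1 \<le> t"
      using u by auto
    then have "agent_state N v G i t = agent_state N v G j t"
      by (rule agent_state_eq_persists[OF ij(3)])
    then have same_end:
      "(int i + int (moves N v G i t)) mod int N = (int j + int (moves N v G j t)) mod int N"
      using agent_state_eq_iff[of i N j v G t] range ij(1,2) by blast
    have Di: "?D i = arc N (int i) (moves N v G i t)"
      by (rule run_Dset_eq_arc[OF run t ij(1,2,4)])
    have Dj: "?D j = arc N (int j) (moves N v G j t)"
      by (rule run_Dset_eq_arc[OF run t ij(2,1) ij(4)[symmetric]])
    have "?D i \<subseteq> ?D j \<or> ?D j \<subseteq> ?D i"
    proof (cases "moves N v G i t \<le> moves N v G j t")
      case True
      then show ?thesis
        using arc_subset_arc_same_end[OF N same_end] unfolding Di Dj by simp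
    next
      case False
      then show ?thesis
        using arc_subset_arc_same_end[OF N same_end[symmetric]] unfolding Di Dj by simp
    qed
    then show False
      using ij run_irredundant[OF run t] redundant_if_covered[of i "A t" "{j}" ?D]
        redundant_if_covered[of j "A t" "{i}" ?D]
      by auto
  qed
  then have "inj_on ?pos {i\<in>A t. \<not> moved N v G i u}"
    by (rule inj_on_subset) auto
  moreover have "?pos ` {i\<in>A t. \<not> moved N v G i u} \<subseteq> {q\<in>{1..N}. {v q, v (Suc q)} \<notin> G u}"
  proof
    fix q assume "q \<in> ?pos ` {i\<in>A t. \<not> moved N v G i u}"
    then obtain i where "i \<in> A t" "\<not> moved N v G i u" "q = ?pos i"
      by auto
    then show "q \<in> {q\<in>{1..N}. {v q, v (Suc q)} \<notin> G u}"
      using range agent_state_in_range[of i N v G "u - 1"] by (auto simp: moved_def)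
  qed
  ultimately show ?thesis
    by (rule card_inj_on_le) simp
qed

lemma run_card_stuck_le_missing_edges:
  assumes "roundabout_run N v G A" "is_dfs_tour ET r0 N v" "finite ET"
    and "t \<in> {1..N}" "u \<in> {1..t}"
  shows "card {i\<in>A t. \<not> moved N v G i u} \<le> 2 * card (ET - G u)"
  using run_card_stuck_le[OF assms(1,4,5)] card_tour_steps_outside[OF assms(2,3)]
  by (rule order_trans)

theorem lemma8:
  fixes V :: "'a set" and ET :: "'a set set" and r0 :: 'a and v :: "nat \<Rightarrow> 'a"
    and G :: "nat \<Rightarrow> 'a set set" and A :: "nat \<Rightarrow> nat set"
    and n k N t r :: nat
  assumes "finite V" and "card V = n" and "n \<ge> 2"
    and "is_tree V ET"
    and "N = 2 * (n - 1)"
    and "r0 \<in> V"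
    and "is_dfs_tour ET r0 N v"
    and "\<forall>s\<in>{1..N}. G s \<subseteq> edges_on V \<and> card (ET - G s) \<le> k"
    and "roundabout_run N v G A"
    and "t \<in> {1..N}"
    and "2 * k + 1 \<le> r" and "r \<le> N"
    and "card (A t) \<ge> r"
  shows "real t \<le> (2 * real N - real r) / (real r - 2 * real k)"
proof -
  let ?m = "card (A t)"
  have finite_ET: "finite ET"
    using assms(1,4) by (rule is_tree_finite_edges)
  have "finite (A t)"
    using run_survivors_subset[OF assms(9), of t] assms(10) by (auto intro: finite_subset)
  moreover have "\<forall>u\<in>{1..t}. card {i\<in>A t. \<not> moved N v G i u} \<le> 2 * k"
  proof
    fix u assume u: "u \<in> {1..t}"
    then have "card (ET - G u) \<le> k"
      using assms(8,10) by auto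
    then show "card {i\<in>A t. \<not> moved N v G i u} \<le> 2 * k"
      using run_card_stuck_le_missing_edges[OF assms(9,7) finite_ET assms(10) u]
      by linarith
  qed
  ultimately have "t * ?m \<le> (\<Sum>i\<in>A t. moves N v G i t) + t * (2 * k)"
    by (rule sum_moves_ge)
  moreover have "(\<Sum>i\<in>A t. moves N v G i t) + ?m \<le> 2 * N"
    using run_sum_moves_le[OF assms(9,10)] unfolding sum.distrib by simp
  ultimately have "t * r + r \<le> 2 * N + t * (2 * k)"
    using assms(13) mult_le_mono2[of r ?m t] by linarith
  then have "real (t * r + r) \<le> real (2 * N + t * (2 * k))"
    by (simp only: of_nat_le_iff)
  then have "real t * (real r - 2 * real k) \<le> 2 * real N - real r"
    by (simp add: algebra_simps)
  then show ?thesis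
    using assms(11) by (simp add: pos_le_divide_eq)
qed

end
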